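(* Let $\Sigma$ be a signature (under the standing assumptions below) and let $(F,\sigma,\theta),(F',\sigma',\theta'):\mathcal F_\Sigma\to\mathcal C$ be two cwf morphisms into a cwf $\mathcal C$ such that: $F(\Gamma)=F'(\Gamma)$ whenever $(\Gamma,S)\in\Sigma$ or $(\Gamma,f,U)\in\Sigma$; $\sigma(\Gamma,S(\mathrm{OV}(\Gamma)))=\sigma'(\Gamma,S(\mathrm{OV}(\Gamma)))$ for all $(\Gamma,S)\in\Sigma$; and $\sigma(\Gamma,U)=\sigma'(\Gamma,U)$ and $\theta(\Gamma,U,f(\mathrm{OV}(\Gamma)))=\theta'(\Gamma,U,f(\mathrm{OV}(\Gamma)))$ for all $(\Gamma,f,U)\in\Sigma$. Then $(F,\sigma,\theta)=(F',\sigma',\theta')$.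
   Context: Standing assumptions: the variable set is $V=\{1,2,3,\ldots\}$ with $\mathsf{fr}(X)=\max(\{1\}\cup\{x+1:x\in X\})$ and $\varphi(X)=\{\mathsf{fr}(X)\}$ for finite $X\subseteq V$; all declarations of signatures are on standard form, written $(\Gamma,S)$ (type) and $(\Gamma,f,U)$ (function). Preelements are terms built from variables and function symbols; a pretype is $S(t_1,\ldots,t_n)$ with $S$ a type symbol and $t_i$ preelements; $\mathrm{V}(E)$ is the set of variables of $E$; $E[\bar a/\bar x]$ is simultaneous substitution. A precontext is $\Gamma=x_1:A_1,\ldots,x_n:A_n$ with $x_k=\mathsf{fr}(\{x_1,\ldots,x_{k-1}\})$ and $\mathrm{V}(A_k)\subseteq\{x_1,\ldots,x_{k-1}\}$; $\mathrm{OV}(\Gamma)=x_1,\ldots,x_n$; $\mathrm{fresh}(\Gamma)=\mathsf{fr}(\{x_1,\ldots,x_n\})$; $E[\bar a/\Gamma]=E[\bar a/x_1,\ldots,x_n]$. A presignature is a set of declarations $(\Gamma,S)$ ($S$ a type symbol) and $(\Gamma,f,U)$ ($f$ a function symbol, $U$ a pretype with $\mathrm{V}(U)\subseteq\mathrm{V}(\Gamma)$), each symbol declared at most once. $\mathcal{J}(\Sigma)$ is the smallest set of judgements ("$\Gamma$ context", "$A$ type $(\Gamma)$", "$a:A\ (\Gamma)$") closed under: (R1) $\langle\rangle$ context; (R2) from $\Gamma$ context and $A$ type $(\Gamma)$ infer $\Gamma,\mathrm{fresh}(\Gamma):A$ context; (R3) from $x_1:A_1,\ldots,x_n:A_n$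 context infer $x_i:A_i\ (x_1:A_1,\ldots,x_n:A_n)$; (R4) if $(\Gamma,S)\in\Sigma$ and $\bar a:\Delta\to\Gamma$ infer $S(\bar a)$ type $(\Delta)$; (R5) if $(\Gamma,f,U)\in\Sigma$, $\bar a:\Delta\to\Gamma$ and $U[\bar a/\Gamma]$ type $(\Delta)$ infer $f(\bar a):U[\bar a/\Gamma]\ (\Delta)$; where, for $\Gamma=x_1:A_1,\ldots,x_n:A_n$, "$\bar a:\Delta\to\Gamma$" abbreviates the judgements $\Delta$ context, $\Gamma$ context, $a_k:A_k[a_1,\ldots,a_{k-1}/x_1,\ldots,x_{k-1}]\ (\Delta)$ ($k=1,\ldots,n$). $\Sigma$ is a signature if ($\Gamma$ context)$\in\mathcal{J}(\Sigma)$ for $(\Gamma,S)\in\Sigma$ and ($U$ type $(\Gamma)$)$\in\mathcal{J}(\Sigma)$ for $(\Gamma,f,U)\in\Sigma$. A category with families (cwf) consists of: a category $\mathcal C$ with a terminal object $\top$; for each object $\Gamma$ a class $\mathrm{Ty}(\Gamma)$, and for $f:\Delta\to\Gamma$ a function $A\mapsto A\{f\}:\mathrm{Ty}(\Gamma)\to\mathrm{Ty}(\Delta)$ with $A\{1\}=A$, $A\{f\circ g\}=A\{f\}\{g\}$; for $A\in\mathrm{Ty}(\Gamma)$ an object $\Gamma.A$ and a morphism $\mathrm{p}(A)=\mathrm{p}_\Gamma(A):\Gamma.A\to\Gamma$; for $A\in\mathrm{Ty}(\Gamma)$ a class $\mathrm{Tm}(\Gamma,A)$ and for $f:\Delta\to\Gamma$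 a function $a\mapsto a\{f\}:\mathrm{Tm}(\Gamma,A)\to\mathrm{Tm}(\Delta,A\{f\})$ with $a\{1\}=a$, $a\{f\circ g\}=a\{f\}\{g\}$; for each $A\in\mathrm{Ty}(\Gamma)$ an element $\mathrm{v}_A\in\mathrm{Tm}(\Gamma.A,A\{\mathrm{p}(A)\})$; for $f:\Delta\to\Gamma$ and $a\in\mathrm{Tm}(\Delta,A\{f\})$ a morphism $\langle f,a\rangle_A:\Delta\to\Gamma.A$ such that $\mathrm{p}(A)\circ\langle f,a\rangle_A=f$, $\mathrm{v}_A\{\langle f,a\rangle_A\}=a$, $\langle\mathrm{p}(A)\circ h,\mathrm{v}_A\{h\}\rangle_A=h$ for every $h:\Delta\to\Gamma.A$, and $\langle f,a\rangle_A\circ g=\langle f\circ g,a\{g\}\rangle_A$. A cwf morphism $(F,\sigma,\theta):\mathcal C\to\mathcal C'$ consists of a functor $F$ with $F(\top)=\top'$; functions $\sigma_\Gamma:\mathrm{Ty}(\Gamma)\to\mathrm{Ty}'(F\Gamma)$ with $\sigma_\Delta(A\{f\})=\sigma_\Gamma(A)\{Ff\}$ for $f:\Delta\to\Gamma$, such that $F(\Gamma.A)=F\Gamma.\sigma_\Gamma(A)$ and $F(\mathrm{p}_\Gamma(A))=\mathrm{p}_{F\Gamma}(\sigma_\Gamma(A))$; and functions $\theta_{\Gamma,A}:\mathrm{Tm}(\Gamma,A)\to\mathrm{Tm}'(F\Gamma,\sigma_\Gamma(A))$ with $\theta_{\Delta,A\{f\}}(a\{f\})=\theta_{\Gamma,A}(a)\{Ff\}$,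 $\theta_{\Gamma.A,A\{\mathrm{p}(A)\}}(\mathrm{v}_A)=\mathrm{v}_{\sigma_\Gamma(A)}$, and $F(\langle f,a\rangle_A)=\langle Ff,\theta_{\Delta,A\{f\}}(a)\rangle_{\sigma_\Gamma(A)}$ for $f:\Delta\to\Gamma$, $a\in\mathrm{Tm}(\Delta,A\{f\})$. The cwf $\mathcal F_\Sigma$: objects are precontexts $\Gamma$ with ($\Gamma$ context)$\in\mathcal{J}(\Sigma)$; morphisms $\Delta\to\Gamma$ are triples $(\Delta,\Gamma,\bar a)$ with $\bar a:\Delta\to\Gamma$ a context map in $\mathcal{J}(\Sigma)$; composition $(\Gamma,\Theta,\bar t)\circ(\Delta,\Gamma,\bar s)=(\Delta,\Theta,(t_1[\bar s/\Gamma],\ldots,t_k[\bar s/\Gamma]))$; identity $(\Gamma,\Gamma,\mathrm{OV}(\Gamma))$; terminal object $\langle\rangle$. $\mathrm{Ty}(\Gamma)=\{(\Gamma,A): (A\text{ type }(\Gamma))\in\mathcal{J}(\Sigma)\}$ with $(\Gamma,A)\{(\Delta,\Gamma,\bar a)\}=(\Delta,A[\bar a/\Gamma])$; $\mathrm{Tm}(\Gamma,(\Gamma,A))=\{((\Gamma,A),a): (a:A\ (\Gamma))\in\mathcal{J}(\Sigma)\}$ with $((\Gamma,A),a)\{(\Delta,\Gamma,\bar a)\}=((\Delta,A[\bar a/\Gamma]),a[\bar a/\Gamma])$; for $\mathrm S=(\Gamma,S)$: $\Gamma.\mathrm S=\langle\Gamma,\mathrm{fresh}(\Gamma):S\rangle$,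 $\mathrm{p}_\Gamma(\mathrm S)=(\Gamma.\mathrm S,\Gamma,\mathrm{OV}(\Gamma))$, $\mathrm{v}_{\mathrm S}=((\Gamma.\mathrm S,S),\mathrm{fresh}(\Gamma))$, $\langle(\Delta,\Gamma,\bar s),((\Delta,S[\bar s/\Gamma]),b)\rangle_{\mathrm S}=(\Delta,\Gamma.\mathrm S,(\bar s,b))$. For a cwf morphism $(F,\sigma,\theta)$ out of $\mathcal F_\Sigma$ write $\sigma(\Gamma,A)$ for $\sigma_\Gamma((\Gamma,A))$ and $\theta(\Gamma,A,a)$ for $\theta_{\Gamma,(\Gamma,A)}(((\Gamma,A),a))$. *)

theory Defs
  imports Main
begin

text \<open>Variables are natural numbers; the variable set V is the positive naturals
  (variable 0 never occurs in any derivable judgement). 'f are function symbols,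
  's are type symbols.\<close>

datatype 'f pre = Var nat | App 'f "'f pre list"

datatype ('s, 'f) pty = PTy 's "'f pre list"

type_synonym ('s, 'f) ctx = "(nat \<times> ('s, 'f) pty) list"

fun vars_pre :: "'f pre \<Rightarrow> nat set" where
  "vars_pre (Var x) = {x}"
| "vars_pre (App f ts) = (\<Union>t\<in>set ts. vars_pre t)"

fun vars_pty :: "('s, 'f) pty \<Rightarrow> nat set" where
  "vars_pty (PTy S ts) = (\<Union>t\<in>set ts. vars_pre t)"

definition vars_ctx :: "('s, 'f) ctx \<Rightarrow> nat set" where
  "vars_ctx \<Gamma> = set (map fst \<Gamma>) \<union> (\<Union>p\<in>set \<Gamma>. vars_pty (snd p))"

definition fr :: "nat set \<Rightarrow> nat" where
  "fr X = Max (insert 1 (Suc ` X))"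

definition OV :: "('s, 'f) ctx \<Rightarrow> nat list" where
  "OV \<Gamma> = map fst \<Gamma>"

definition fresh :: "('s, 'f) ctx \<Rightarrow> nat" where
  "fresh \<Gamma> = fr (set (OV \<Gamma>))"

definition precontext :: "('s, 'f) ctx \<Rightarrow> bool" where
  "precontext \<Gamma> \<longleftrightarrow>
     (\<forall>k < length \<Gamma>. fst (\<Gamma> ! k) = fr (set (take k (OV \<Gamma>)))
                     \<and> vars_pty (snd (\<Gamma> ! k)) \<subseteq> set (take k (OV \<Gamma>)))"

fun subst_pre :: "(nat \<Rightarrow> 'f pre option) \<Rightarrow> 'f pre \<Rightarrow> 'f pre" where
  "subst_pre \<rho> (Var x) = (case \<rho> x of Some t \<Rightarrow> t | None \<Rightarrow> Var x)"
| "subst_pre \<rho> (App f ts) = App f (map (subst_pre \<rho>) ts)"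

fun subst_pty :: "(nat \<Rightarrow> 'f pre option) \<Rightarrow> ('s, 'f) pty \<Rightarrow> ('s, 'f) pty" where
  "subst_pty \<rho> (PTy S ts) = PTy S (map (subst_pre \<rho>) ts)"

definition sb :: "nat list \<Rightarrow> 'f pre list \<Rightarrow> nat \<Rightarrow> 'f pre option" where
  "sb xs as = map_of (zip xs as)"

definition sbc :: "('s, 'f) ctx \<Rightarrow> 'f pre list \<Rightarrow> nat \<Rightarrow> 'f pre option" where
  "sbc \<Gamma> as = sb (OV \<Gamma>) as"

datatype ('s, 'f) decl = DTy "('s, 'f) ctx" 's | DFun "('s, 'f) ctx" 'f "('s, 'f) pty"

definition presignature :: "('s, 'f) decl set \<Rightarrow> bool" where
  "presignature \<Sigma> \<longleftrightarrow>
     (\<forall>\<Gamma> S. DTy \<Gamma> S \<in> \<Sigma> \<longrightarrow> precontext \<Gamma>)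
   \<and> (\<forall>\<Gamma> f U. DFun \<Gamma> f U \<in> \<Sigma> \<longrightarrow> precontext \<Gamma> \<and> vars_pty U \<subseteq> vars_ctx \<Gamma>)
   \<and> (\<forall>\<Gamma> \<Gamma>' S. DTy \<Gamma> S \<in> \<Sigma> \<longrightarrow> DTy \<Gamma>' S \<in> \<Sigma> \<longrightarrow> \<Gamma> = \<Gamma>')
   \<and> (\<forall>\<Gamma> \<Gamma>' f U U'. DFun \<Gamma> f U \<in> \<Sigma> \<longrightarrow> DFun \<Gamma>' f U' \<in> \<Sigma> \<longrightarrow> \<Gamma> = \<Gamma>' \<and> U = U')"

datatype ('s, 'f) judg =
    JCtx "('s, 'f) ctx"
  | JType "('s, 'f) ctx" "('s, 'f) pty"
  | JTerm "('s, 'f) ctx" "'f pre" "('s, 'f) pty"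

definition cmap_in :: "('s, 'f) judg set \<Rightarrow> ('s, 'f) ctx \<Rightarrow> ('s, 'f) ctx \<Rightarrow> 'f pre list \<Rightarrow> bool" where
  "cmap_in J \<Delta> \<Gamma> as \<longleftrightarrow>
     JCtx \<Delta> \<in> J \<and> JCtx \<Gamma> \<in> J \<and> length as = length \<Gamma>
   \<and> (\<forall>k < length \<Gamma>. JTerm \<Delta> (as ! k)
          (subst_pty (sb (take k (OV \<Gamma>)) (take k as)) (snd (\<Gamma> ! k))) \<in> J)"


text \<open>In R4 and R5 the premise "a : \<Delta> \<rightarrow> \<Gamma>" is written out (it is cmap_in (Jdg \<Sigma>) \<Delta> \<Gamma> as).\<close>
inductive_set Jdg :: "('s, 'f) decl set \<Rightarrow> ('s, 'f) judg set" for \<Sigma> where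
  R1: "JCtx [] \<in> Jdg \<Sigma>"
| R2: "JCtx \<Gamma> \<in> Jdg \<Sigma> \<Longrightarrow> JType \<Gamma> A \<in> Jdg \<Sigma> \<Longrightarrow> JCtx (\<Gamma> @ [(fresh \<Gamma>, A)]) \<in> Jdg \<Sigma>"
| R3: "JCtx \<Gamma> \<in> Jdg \<Sigma> \<Longrightarrow> i < length \<Gamma> \<Longrightarrow> JTerm \<Gamma> (Var (fst (\<Gamma> ! i))) (snd (\<Gamma> ! i)) \<in> Jdg \<Sigma>"
| R4: "DTy \<Gamma> S \<in> \<Sigma> \<Longrightarrow> JCtx \<Delta> \<in> Jdg \<Sigma> \<Longrightarrow> JCtx \<Gamma> \<in> Jdg \<Sigma> \<Longrightarrow> length as = length \<Gamma>
       \<Longrightarrow> (\<forall>k < length \<Gamma>. JTerm \<Delta> (as ! k)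
             (subst_pty (sb (take k (OV \<Gamma>)) (take k as)) (snd (\<Gamma> ! k))) \<in> Jdg \<Sigma>)
       \<Longrightarrow> JType \<Delta> (PTy S as) \<in> Jdg \<Sigma>"
| R5: "DFun \<Gamma> f U \<in> \<Sigma> \<Longrightarrow> JCtx \<Delta> \<in> Jdg \<Sigma> \<Longrightarrow> JCtx \<Gamma> \<in> Jdg \<Sigma> \<Longrightarrow> length as = length \<Gamma>
       \<Longrightarrow> (\<forall>k < length \<Gamma>. JTerm \<Delta> (as ! k)
             (subst_pty (sb (take k (OV \<Gamma>)) (take k as)) (snd (\<Gamma> ! k))) \<in> Jdg \<Sigma>)
       \<Longrightarrow> JType \<Delta> (subst_pty (sbc \<Gamma> as) U) \<in> Jdg \<Sigma>
       \<Longrightarrow> JTerm \<Delta> (App f as) (subst_pty (sbc \<Gamma> as) U) \<in> Jdg \<Sigma>"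

definition signature :: "('s, 'f) decl set \<Rightarrow> bool" where
  "signature \<Sigma> \<longleftrightarrow> presignature \<Sigma>
     \<and> (\<forall>\<Gamma> S. DTy \<Gamma> S \<in> \<Sigma> \<longrightarrow> JCtx \<Gamma> \<in> Jdg \<Sigma>)
     \<and> (\<forall>\<Gamma> f U. DFun \<Gamma> f U \<in> \<Sigma> \<longrightarrow> JType \<Gamma> U \<in> Jdg \<Sigma>)"

text \<open>Objects 'o, morphisms 'm (each with a domain and codomain), types 't, terms 'e.
  comp g f is g \<circ> f. tsub A f = A{f}; esub a f = a{f}; ext \<Gamma> A = \<Gamma>.A;
  pr \<Gamma> A = p(A); var \<Gamma> A = v_A; pair f a A = \<langle>f,a\<rangle>_A.\<close>

record ('o, 'm, 't, 'e) cwf =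
  Ob :: "'o set"
  Mor :: "'m set"
  cdom :: "'m \<Rightarrow> 'o"
  ccod :: "'m \<Rightarrow> 'o"
  comp :: "'m \<Rightarrow> 'm \<Rightarrow> 'm"
  idm :: "'o \<Rightarrow> 'm"
  top :: "'o"
  Ty :: "'o \<Rightarrow> 't set"
  tsub :: "'t \<Rightarrow> 'm \<Rightarrow> 't"
  ext :: "'o \<Rightarrow> 't \<Rightarrow> 'o"
  pr :: "'o \<Rightarrow> 't \<Rightarrow> 'm"
  Tm :: "'o \<Rightarrow> 't \<Rightarrow> 'e set"
  esub :: "'e \<Rightarrow> 'm \<Rightarrow> 'e"
  var :: "'o \<Rightarrow> 't \<Rightarrow> 'e"
  pair :: "'m \<Rightarrow> 'e \<Rightarrow> 't \<Rightarrow> 'm"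

definition Hom :: "('o, 'm, 't, 'e, 'z) cwf_scheme \<Rightarrow> 'o \<Rightarrow> 'o \<Rightarrow> 'm set" where
  "Hom C \<Delta> \<Gamma> = {f \<in> Mor C. cdom C f = \<Delta> \<and> ccod C f = \<Gamma>}"

definition is_cwf :: "('o, 'm, 't, 'e, 'z) cwf_scheme \<Rightarrow> bool" where
  "is_cwf C \<longleftrightarrow>
     \<comment> \<open>category\<close>
     (\<forall>f \<in> Mor C. cdom C f \<in> Ob C \<and> ccod C f \<in> Ob C)
   \<and> (\<forall>\<Gamma> \<in> Ob C. idm C \<Gamma> \<in> Hom C \<Gamma> \<Gamma>)
   \<and> (\<forall>\<Theta> \<Delta> \<Gamma> f g. f \<in> Hom C \<Theta> \<Delta> \<longrightarrow> g \<in> Hom C \<Delta> \<Gamma> \<longrightarrow> comp C g f \<in> Hom C \<Theta> \<Gamma>)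
   \<and> (\<forall>f \<in> Mor C. comp C (idm C (ccod C f)) f = f \<and> comp C f (idm C (cdom C f)) = f)
   \<and> (\<forall>f g h. f \<in> Mor C \<longrightarrow> g \<in> Mor C \<longrightarrow> h \<in> Mor C \<longrightarrow> ccod C f = cdom C g \<longrightarrow> ccod C g = cdom C h
        \<longrightarrow> comp C h (comp C g f) = comp C (comp C h g) f)
     \<comment> \<open>terminal object\<close>
   \<and> top C \<in> Ob C \<and> (\<forall>\<Gamma> \<in> Ob C. \<exists>!f. f \<in> Hom C \<Gamma> (top C))
     \<comment> \<open>types and their substitution\<close>
   \<and> (\<forall>\<Delta> \<Gamma> f A. f \<in> Hom C \<Delta> \<Gamma> \<longrightarrow> A \<in> Ty C \<Gamma> \<longrightarrow> tsub C A f \<in> Ty C \<Delta>)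
   \<and> (\<forall>\<Gamma> \<in> Ob C. \<forall>A \<in> Ty C \<Gamma>. tsub C A (idm C \<Gamma>) = A)
   \<and> (\<forall>\<Theta> \<Delta> \<Gamma> f g A. f \<in> Hom C \<Delta> \<Gamma> \<longrightarrow> g \<in> Hom C \<Theta> \<Delta> \<longrightarrow> A \<in> Ty C \<Gamma>
        \<longrightarrow> tsub C A (comp C f g) = tsub C (tsub C A f) g)
     \<comment> \<open>comprehension\<close>
   \<and> (\<forall>\<Gamma> \<in> Ob C. \<forall>A \<in> Ty C \<Gamma>. ext C \<Gamma> A \<in> Ob C \<and> pr C \<Gamma> A \<in> Hom C (ext C \<Gamma> A) \<Gamma>)
     \<comment> \<open>terms and their substitution\<close>
   \<and> (\<forall>\<Delta> \<Gamma> f A a. f \<in> Hom C \<Delta> \<Gamma> \<longrightarrow> A \<in> Ty C \<Gamma> \<longrightarrow> a \<in> Tm C \<Gamma> A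
        \<longrightarrow> esub C a f \<in> Tm C \<Delta> (tsub C A f))
   \<and> (\<forall>\<Gamma> \<in> Ob C. \<forall>A \<in> Ty C \<Gamma>. \<forall>a \<in> Tm C \<Gamma> A. esub C a (idm C \<Gamma>) = a)
   \<and> (\<forall>\<Theta> \<Delta> \<Gamma> f g A a. f \<in> Hom C \<Delta> \<Gamma> \<longrightarrow> g \<in> Hom C \<Theta> \<Delta> \<longrightarrow> A \<in> Ty C \<Gamma> \<longrightarrow> a \<in> Tm C \<Gamma> A
        \<longrightarrow> esub C a (comp C f g) = esub C (esub C a f) g)
     \<comment> \<open>variable and extension\<close>
   \<and> (\<forall>\<Gamma> \<in> Ob C. \<forall>A \<in> Ty C \<Gamma>. var C \<Gamma> A \<in> Tm C (ext C \<Gamma> A) (tsub C A (pr C \<Gamma> A)))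
   \<and> (\<forall>\<Delta> \<Gamma> f A a. f \<in> Hom C \<Delta> \<Gamma> \<longrightarrow> A \<in> Ty C \<Gamma> \<longrightarrow> a \<in> Tm C \<Delta> (tsub C A f)
        \<longrightarrow> pair C f a A \<in> Hom C \<Delta> (ext C \<Gamma> A)
          \<and> comp C (pr C \<Gamma> A) (pair C f a A) = f
          \<and> esub C (var C \<Gamma> A) (pair C f a A) = a)
   \<and> (\<forall>\<Delta> \<Gamma> h A. \<Gamma> \<in> Ob C \<longrightarrow> A \<in> Ty C \<Gamma> \<longrightarrow> h \<in> Hom C \<Delta> (ext C \<Gamma> A)
        \<longrightarrow> pair C (comp C (pr C \<Gamma> A) h) (esub C (var C \<Gamma> A) h) A = h)
   \<and> (\<forall>\<Theta> \<Delta> \<Gamma> f g A a. f \<in> Hom C \<Delta> \<Gamma> \<longrightarrow> g \<in> Hom C \<Theta> \<Delta> \<longrightarrow> A \<in> Ty C \<Gamma> \<longrightarrow> a \<in> Tm C \<Delta> (tsub C A f)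
        \<longrightarrow> comp C (pair C f a A) g = pair C (comp C f g) (esub C a g) A)"

text \<open>A cwf morphism (F, \<sigma>, \<theta>): F is given by its object part Fo and morphism part Fm;
  \<sigma>_\<Gamma>(A) = Fs \<Gamma> A; \<theta>_{\<Gamma>,A}(a) = Ft \<Gamma> A a.\<close>

record ('o, 'm, 't, 'e, 'o2, 'm2, 't2, 'e2) cwf_mor =
  Fo :: "'o \<Rightarrow> 'o2"
  Fm :: "'m \<Rightarrow> 'm2"
  Fs :: "'o \<Rightarrow> 't \<Rightarrow> 't2"
  Ft :: "'o \<Rightarrow> 't \<Rightarrow> 'e \<Rightarrow> 'e2"

definition is_cwf_mor ::
  "('o, 'm, 't, 'e, 'z) cwf_scheme \<Rightarrow> ('o2, 'm2, 't2, 'e2, 'z2) cwf_scheme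
   \<Rightarrow> ('o, 'm, 't, 'e, 'o2, 'm2, 't2, 'e2) cwf_mor \<Rightarrow> bool" where
  "is_cwf_mor C D M \<longleftrightarrow>
     \<comment> \<open>F is a functor preserving the terminal object\<close>
     (\<forall>\<Gamma> \<in> Ob C. Fo M \<Gamma> \<in> Ob D)
   \<and> (\<forall>\<Delta> \<Gamma> f. f \<in> Hom C \<Delta> \<Gamma> \<longrightarrow> Fm M f \<in> Hom D (Fo M \<Delta>) (Fo M \<Gamma>))
   \<and> (\<forall>\<Gamma> \<in> Ob C. Fm M (idm C \<Gamma>) = idm D (Fo M \<Gamma>))
   \<and> (\<forall>f g. f \<in> Mor C \<longrightarrow> g \<in> Mor C \<longrightarrow> ccod C f = cdom C g
        \<longrightarrow> Fm M (comp C g f) = comp D (Fm M g) (Fm M f))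
   \<and> Fo M (top C) = top D
     \<comment> \<open>\<sigma>\<close>
   \<and> (\<forall>\<Gamma> \<in> Ob C. \<forall>A \<in> Ty C \<Gamma>. Fs M \<Gamma> A \<in> Ty D (Fo M \<Gamma>))
   \<and> (\<forall>\<Delta> \<Gamma> f A. f \<in> Hom C \<Delta> \<Gamma> \<longrightarrow> A \<in> Ty C \<Gamma>
        \<longrightarrow> Fs M \<Delta> (tsub C A f) = tsub D (Fs M \<Gamma> A) (Fm M f))
   \<and> (\<forall>\<Gamma> \<in> Ob C. \<forall>A \<in> Ty C \<Gamma>. Fo M (ext C \<Gamma> A) = ext D (Fo M \<Gamma>) (Fs M \<Gamma> A)
        \<and> Fm M (pr C \<Gamma> A) = pr D (Fo M \<Gamma>) (Fs M \<Gamma> A))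
     \<comment> \<open>\<theta>\<close>
   \<and> (\<forall>\<Gamma> \<in> Ob C. \<forall>A \<in> Ty C \<Gamma>. \<forall>a \<in> Tm C \<Gamma> A. Ft M \<Gamma> A a \<in> Tm D (Fo M \<Gamma>) (Fs M \<Gamma> A))
   \<and> (\<forall>\<Delta> \<Gamma> f A a. f \<in> Hom C \<Delta> \<Gamma> \<longrightarrow> A \<in> Ty C \<Gamma> \<longrightarrow> a \<in> Tm C \<Gamma> A
        \<longrightarrow> Ft M \<Delta> (tsub C A f) (esub C a f) = esub D (Ft M \<Gamma> A a) (Fm M f))
   \<and> (\<forall>\<Gamma> \<in> Ob C. \<forall>A \<in> Ty C \<Gamma>.
        Ft M (ext C \<Gamma> A) (tsub C A (pr C \<Gamma> A)) (var C \<Gamma> A) = var D (Fo M \<Gamma>) (Fs M \<Gamma> A))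
   \<and> (\<forall>\<Delta> \<Gamma> f A a. f \<in> Hom C \<Delta> \<Gamma> \<longrightarrow> A \<in> Ty C \<Gamma> \<longrightarrow> a \<in> Tm C \<Delta> (tsub C A f)
        \<longrightarrow> Fm M (pair C f a A) = pair D (Fm M f) (Ft M \<Delta> (tsub C A f) a) (Fs M \<Gamma> A))"

definition cwf_mor_eq ::
  "('o, 'm, 't, 'e, 'z) cwf_scheme \<Rightarrow> ('o, 'm, 't, 'e, 'o2, 'm2, 't2, 'e2) cwf_mor
   \<Rightarrow> ('o, 'm, 't, 'e, 'o2, 'm2, 't2, 'e2) cwf_mor \<Rightarrow> bool" where
  "cwf_mor_eq C M M' \<longleftrightarrow>
     (\<forall>\<Gamma> \<in> Ob C. Fo M \<Gamma> = Fo M' \<Gamma>)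
   \<and> (\<forall>f \<in> Mor C. Fm M f = Fm M' f)
   \<and> (\<forall>\<Gamma> \<in> Ob C. \<forall>A \<in> Ty C \<Gamma>. Fs M \<Gamma> A = Fs M' \<Gamma> A)
   \<and> (\<forall>\<Gamma> \<in> Ob C. \<forall>A \<in> Ty C \<Gamma>. \<forall>a \<in> Tm C \<Gamma> A. Ft M \<Gamma> A a = Ft M' \<Gamma> A a)"

type_synonym ('s, 'f) fmor = "('s, 'f) ctx \<times> ('s, 'f) ctx \<times> 'f pre list"
type_synonym ('s, 'f) fty = "('s, 'f) ctx \<times> ('s, 'f) pty"
type_synonym ('s, 'f) ftm = "('s, 'f) fty \<times> 'f pre"

definition FSigma :: "('s, 'f) decl set \<Rightarrow>
    (('s, 'f) ctx, ('s, 'f) fmor, ('s, 'f) fty, ('s, 'f) ftm) cwf" where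
  "FSigma \<Sigma> = \<lparr>
     Ob = {\<Gamma>. precontext \<Gamma> \<and> JCtx \<Gamma> \<in> Jdg \<Sigma>},
     Mor = {(\<Delta>, \<Gamma>, as). precontext \<Delta> \<and> precontext \<Gamma> \<and> cmap_in (Jdg \<Sigma>) \<Delta> \<Gamma> as},
     cdom = (\<lambda>(\<Delta>, \<Gamma>, as). \<Delta>),
     ccod = (\<lambda>(\<Delta>, \<Gamma>, as). \<Gamma>),
     comp = (\<lambda>(\<Gamma>, \<Theta>, ts) (\<Delta>, \<Gamma>', ss). (\<Delta>, \<Theta>, map (subst_pre (sbc \<Gamma>' ss)) ts)),
     idm = (\<lambda>\<Gamma>. (\<Gamma>, \<Gamma>, map Var (OV \<Gamma>))),
     top = [],
     Ty = (\<lambda>\<Gamma>. {(\<Gamma>', A). \<Gamma>' = \<Gamma> \<and> JType \<Gamma> A \<in> Jdg \<Sigma>}),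
     tsub = (\<lambda>(\<Gamma>', A) (\<Delta>, \<Gamma>, as). (\<Delta>, subst_pty (sbc \<Gamma> as) A)),
     ext = (\<lambda>\<Gamma> (\<Gamma>', S). \<Gamma> @ [(fresh \<Gamma>, S)]),
     pr = (\<lambda>\<Gamma> (\<Gamma>', S). (\<Gamma> @ [(fresh \<Gamma>, S)], \<Gamma>, map Var (OV \<Gamma>))),
     Tm = (\<lambda>\<Gamma> (\<Gamma>', A). {((\<Gamma>'', A'), a). \<Gamma>'' = \<Gamma> \<and> \<Gamma>' = \<Gamma> \<and> A' = A \<and> JTerm \<Gamma> a A \<in> Jdg \<Sigma>}),
     esub = (\<lambda>((\<Gamma>', A), a) (\<Delta>, \<Gamma>, as). ((\<Delta>, subst_pty (sbc \<Gamma> as) A), subst_pre (sbc \<Gamma> as) a)),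
     var = (\<lambda>\<Gamma> (\<Gamma>', S). ((\<Gamma> @ [(fresh \<Gamma>, S)], S), Var (fresh \<Gamma>))),
     pair = (\<lambda>(\<Delta>, \<Gamma>, ss) ((\<Delta>', B), b) (\<Gamma>', S). (\<Delta>, \<Gamma> @ [(fresh \<Gamma>, S)], ss @ [b]))
   \<rparr>"

end

theory Submission
  imports Defs
begin

text \<open>
  The cwf F_\<Sigma> is generated by the declared symbols. A derivable context is built from the
  empty one by comprehension, and its variables are the generic terms v, weakened along
  projections; a context map a : \<Delta> \<rightarrow> \<Gamma> is an iterated pairing of its components, starting
  from the map into the terminal object; and S(a), f(a) are the substitution instances
  S(OV \<Gamma>){a}, f(OV \<Gamma>){a} of the generators. A cwf morphism commutes with all these
  operations, so by induction on derivations two morphisms that agree on the generators agree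
  on every context, context map, type and term of F_\<Sigma>.
\<close>

lemma fr_greater: "finite X \<Longrightarrow> x \<in> X \<Longrightarrow> x < fr X"
  unfolding fr_def by (metis Max_ge finite_imageI finite_insert image_eqI insertI2 less_eq_Suc_le)

lemma length_OV [simp]: "length (OV \<Gamma>) = length \<Gamma>"
  by (simp add: OV_def)

lemma OV_take: "OV (take n \<Gamma>) = take n (OV \<Gamma>)"
  by (simp add: OV_def take_map)

lemma nth_OV [simp]: "k < length \<Gamma> \<Longrightarrow> OV \<Gamma> ! k = fst (\<Gamma> ! k)"
  by (simp add: OV_def)

lemma precontext_sorted_OV: "precontext \<Gamma> \<Longrightarrow> sorted_wrt (<) (OV \<Gamma>)"
proof (unfold sorted_wrt_iff_nth_less, intro allI impI)
  fix i j assume "precontext \<Gamma>" "i < j" "j < length (OV \<Gamma>)"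
  then have "OV \<Gamma> ! j = fr (set (take j (OV \<Gamma>)))" and "OV \<Gamma> ! i \<in> set (take j (OV \<Gamma>))"
    by (auto simp: precontext_def in_set_conv_nth intro!: exI[of _ i])
  then show "OV \<Gamma> ! i < OV \<Gamma> ! j" by (simp add: fr_greater)
qed

lemma precontext_distinct_OV: "precontext \<Gamma> \<Longrightarrow> distinct (OV \<Gamma>)"
  using precontext_sorted_OV strict_sorted_iff by blast

lemma precontext_take: "precontext \<Gamma> \<Longrightarrow> precontext (take n \<Gamma>)"
  unfolding precontext_def OV_take by auto

lemma take_Suc_precontext:
  "precontext \<Gamma> \<Longrightarrow> n < length \<Gamma> \<Longrightarrow> take (Suc n) \<Gamma> = take n \<Gamma> @ [(fresh (take n \<Gamma>), snd (\<Gamma> ! n))]"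
  unfolding precontext_def fresh_def OV_take by (simp add: take_Suc_conv_app_nth prod_eq_iff)

lemma subst_pre_Var_self: "subst_pre (sb xs (map Var xs)) t = t"
  by (induction t) (auto simp: sb_def map_of_zip_map intro: map_idI)

lemma subst_pty_Var_self: "subst_pty (sb xs (map Var xs)) A = A"
  by (cases A) (simp add: subst_pre_Var_self map_idI)

lemma map_subst_pre_Var:
  "distinct xs \<Longrightarrow> length as = length xs \<Longrightarrow> map (subst_pre (sb xs as)) (map Var xs) = as"
  by (rule nth_equalityI) (auto simp: sb_def map_of_zip_nth)

text \<open>The paper's \<open>A\<^sub>k[a\<^sub>1, \<dots>, a\<^sub>k\<^sub>-\<^sub>1 / x\<^sub>1, \<dots>, x\<^sub>k\<^sub>-\<^sub>1]\<close>
  (indices counted from 0 here), the type of the \<open>k\<close>-th component of a context map.\<close>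

definition cmap_type :: "('s, 'f) ctx \<Rightarrow> 'f pre list \<Rightarrow> nat \<Rightarrow> ('s, 'f) pty" where
  "cmap_type \<Gamma> as k = subst_pty (sb (take k (OV \<Gamma>)) (take k as)) (snd (\<Gamma> ! k))"

lemma cmap_in_iff:
  "cmap_in J \<Delta> \<Gamma> as \<longleftrightarrow> JCtx \<Delta> \<in> J \<and> JCtx \<Gamma> \<in> J \<and> length as = length \<Gamma>
     \<and> (\<forall>k < length \<Gamma>. JTerm \<Delta> (as ! k) (cmap_type \<Gamma> as k) \<in> J)"
  by (simp add: cmap_in_def cmap_type_def)

lemma Jdg_weaken:
  "j \<in> Jdg \<Sigma> \<Longrightarrow> (case j of
       JCtx _ \<Rightarrow> True
     | JType \<Delta> A \<Rightarrow> (\<forall>R. JCtx (\<Delta> @ R) \<in> Jdg \<Sigma> \<longrightarrow> JType (\<Delta> @ R) A \<in> Jdg \<Sigma>)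
     | JTerm \<Delta> a A \<Rightarrow> (\<forall>R. JCtx (\<Delta> @ R) \<in> Jdg \<Sigma> \<longrightarrow> JTerm (\<Delta> @ R) a A \<in> Jdg \<Sigma>))"
proof (induction rule: Jdg.induct)
  case (R3 \<Gamma> i)
  then show ?case using Jdg.R3[of "\<Gamma> @ _" \<Sigma> i] by (auto simp: nth_append)
next
  case (R4 \<Gamma> S \<Delta> as)
  then show ?case by (auto intro!: Jdg.R4)
next
  case (R5 \<Gamma> f U \<Delta> as)
  then show ?case by (auto intro!: Jdg.R5)
qed auto

lemma JType_weaken:
  "JType \<Delta> A \<in> Jdg \<Sigma> \<Longrightarrow> JCtx (\<Delta> @ R) \<in> Jdg \<Sigma> \<Longrightarrow> JType (\<Delta> @ R) A \<in> Jdg \<Sigma>"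
  using Jdg_weaken[of "JType \<Delta> A"] by auto

lemma JCtx_snocD: "JCtx (\<Gamma> @ [(x, A)]) \<in> Jdg \<Sigma> \<Longrightarrow> JCtx \<Gamma> \<in> Jdg \<Sigma> \<and> JType \<Gamma> A \<in> Jdg \<Sigma>"
  by (auto elim: Jdg.cases)

lemma JCtx_prefix: "JCtx (\<Gamma> @ \<Gamma>') \<in> Jdg \<Sigma> \<Longrightarrow> JCtx \<Gamma> \<in> Jdg \<Sigma>"
  by (induction \<Gamma>' rule: rev_induct) (auto dest: JCtx_snocD simp flip: append_assoc)

lemma JType_nth_ctx:
  assumes "JCtx \<Gamma> \<in> Jdg \<Sigma>" and "n < length \<Gamma>"
  shows "JType (take n \<Gamma>) (snd (\<Gamma> ! n)) \<in> Jdg \<Sigma>"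
proof -
  have "JCtx ((take n \<Gamma> @ [\<Gamma> ! n]) @ drop (Suc n) \<Gamma>) \<in> Jdg \<Sigma>"
    using assms by (simp flip: id_take_nth_drop)
  then have "JCtx (take n \<Gamma> @ [\<Gamma> ! n]) \<in> Jdg \<Sigma>"
    by (rule JCtx_prefix)
  then show ?thesis by (metis JCtx_snocD prod.collapse)
qed

lemma JType_var:
  assumes "JCtx \<Gamma> \<in> Jdg \<Sigma>" and "i < length \<Gamma>"
  shows "JType \<Gamma> (snd (\<Gamma> ! i)) \<in> Jdg \<Sigma>"
  using JType_weaken[OF JType_nth_ctx[OF assms], of "drop i \<Gamma>"] assms(1) by simp

lemma cmap_in_proj:
  assumes "JCtx (\<Gamma> @ R) \<in> Jdg \<Sigma>"
  shows "cmap_in (Jdg \<Sigma>) (\<Gamma> @ R) \<Gamma> (map Var (OV \<Gamma>))"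
proof -
  have "JTerm (\<Gamma> @ R) (Var (fst (\<Gamma> ! k))) (snd (\<Gamma> ! k)) \<in> Jdg \<Sigma>" if "k < length \<Gamma>" for k
    using Jdg.R3[OF assms, of k] that by (simp add: nth_append)
  then show ?thesis
    using assms JCtx_prefix[OF assms]
    by (simp add: cmap_in_iff cmap_type_def take_map subst_pty_Var_self flip: OV_take)
qed

lemma cmap_type_take: "k < n \<Longrightarrow> cmap_type (take n \<Gamma>) (take n as) k = cmap_type \<Gamma> as k"
  by (simp add: cmap_type_def OV_take)

lemma cmap_in_take:
  assumes "cmap_in (Jdg \<Sigma>) \<Delta> \<Gamma> as" and "n \<le> length \<Gamma>"
  shows "cmap_in (Jdg \<Sigma>) \<Delta> (take n \<Gamma>) (take n as)"
  using assms JCtx_prefix[of "take n \<Gamma>" "drop n \<Gamma>"] by (simp add: cmap_in_iff cmap_type_take)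

lemma FSigma_simps [simp]:
  "\<Gamma> \<in> Ob (FSigma \<Sigma>) \<longleftrightarrow> precontext \<Gamma> \<and> JCtx \<Gamma> \<in> Jdg \<Sigma>"
  "(\<Delta>, \<Gamma>, as) \<in> Mor (FSigma \<Sigma>) \<longleftrightarrow> precontext \<Delta> \<and> precontext \<Gamma> \<and> cmap_in (Jdg \<Sigma>) \<Delta> \<Gamma> as"
  "top (FSigma \<Sigma>) = []"
  "(\<Gamma>', A) \<in> Ty (FSigma \<Sigma>) \<Gamma> \<longleftrightarrow> \<Gamma>' = \<Gamma> \<and> JType \<Gamma> A \<in> Jdg \<Sigma>"
  "((\<Gamma>'', A'), a) \<in> Tm (FSigma \<Sigma>) \<Gamma> (\<Gamma>', A) \<longleftrightarrow> \<Gamma>'' = \<Gamma> \<and> \<Gamma>' = \<Gamma> \<and> A' = A \<and> JTerm \<Gamma> a A \<in> Jdg \<Sigma>"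
  "tsub (FSigma \<Sigma>) (\<Gamma>', A) (\<Delta>, \<Gamma>, as) = (\<Delta>, subst_pty (sbc \<Gamma> as) A)"
  "esub (FSigma \<Sigma>) ((\<Gamma>', A), a) (\<Delta>, \<Gamma>, as) = ((\<Delta>, subst_pty (sbc \<Gamma> as) A), subst_pre (sbc \<Gamma> as) a)"
  "ext (FSigma \<Sigma>) \<Gamma> (\<Gamma>', A) = \<Gamma> @ [(fresh \<Gamma>, A)]"
  "pr (FSigma \<Sigma>) \<Gamma> (\<Gamma>', A) = (\<Gamma> @ [(fresh \<Gamma>, A)], \<Gamma>, map Var (OV \<Gamma>))"
  "var (FSigma \<Sigma>) \<Gamma> (\<Gamma>', A) = ((\<Gamma> @ [(fresh \<Gamma>, A)], A), Var (fresh \<Gamma>))"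
  "pair (FSigma \<Sigma>) (\<Delta>, \<Gamma>, as) ((\<Delta>', B), b) (\<Gamma>', A) = (\<Delta>, \<Gamma> @ [(fresh \<Gamma>, A)], as @ [b])"
  by (simp_all add: FSigma_def)

lemma Hom_FSigma:
  "(\<Delta>, \<Gamma>, as) \<in> Hom (FSigma \<Sigma>) \<Delta>' \<Gamma>'
     \<longleftrightarrow> \<Delta>' = \<Delta> \<and> \<Gamma>' = \<Gamma> \<and> (\<Delta>, \<Gamma>, as) \<in> Mor (FSigma \<Sigma>)"
  by (auto simp: Hom_def FSigma_def)

lemma FSigma_pair_take_Suc:
  assumes "precontext \<Gamma>" and "n < length \<Gamma>" and "length as = length \<Gamma>"
  shows "(\<Delta>, take (Suc n) \<Gamma>, take (Suc n) as)
       = pair (FSigma \<Sigma>) (\<Delta>, take n \<Gamma>, take n as) ((\<Delta>, B), as ! n) (take n \<Gamma>, snd (\<Gamma> ! n))"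
  using assms by (simp add: take_Suc_precontext take_Suc_conv_app_nth)

lemma cwf_Hom_top_unique:
  "is_cwf C \<Longrightarrow> X \<in> Ob C \<Longrightarrow> f \<in> Hom C X (top C) \<Longrightarrow> g \<in> Hom C X (top C) \<Longrightarrow> f = g"
  unfolding is_cwf_def by (metis (no_types, lifting))

lemma cwf_mor_Ob: "is_cwf_mor C D N \<Longrightarrow> \<Gamma> \<in> Ob C \<Longrightarrow> Fo N \<Gamma> \<in> Ob D"
  by (simp add: is_cwf_mor_def)

lemma cwf_mor_Hom: "is_cwf_mor C D N \<Longrightarrow> f \<in> Hom C \<Delta> \<Gamma> \<Longrightarrow> Fm N f \<in> Hom D (Fo N \<Delta>) (Fo N \<Gamma>)"
  by (simp add: is_cwf_mor_def)

lemma cwf_mor_top: "is_cwf_mor C D N \<Longrightarrow> Fo N (top C) = top D"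
  by (simp add: is_cwf_mor_def)

lemma cwf_mor_tsub: "is_cwf_mor C D N \<Longrightarrow> f \<in> Hom C \<Delta> \<Gamma> \<Longrightarrow> A \<in> Ty C \<Gamma> \<Longrightarrow>
    Fs N \<Delta> (tsub C A f) = tsub D (Fs N \<Gamma> A) (Fm N f)"
  by (simp add: is_cwf_mor_def)

lemma cwf_mor_ext: "is_cwf_mor C D N \<Longrightarrow> \<Gamma> \<in> Ob C \<Longrightarrow> A \<in> Ty C \<Gamma> \<Longrightarrow>
    Fo N (ext C \<Gamma> A) = ext D (Fo N \<Gamma>) (Fs N \<Gamma> A)"
  by (simp add: is_cwf_mor_def)

lemma cwf_mor_pr: "is_cwf_mor C D N \<Longrightarrow> \<Gamma> \<in> Ob C \<Longrightarrow> A \<in> Ty C \<Gamma> \<Longrightarrow>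
    Fm N (pr C \<Gamma> A) = pr D (Fo N \<Gamma>) (Fs N \<Gamma> A)"
  by (simp add: is_cwf_mor_def)

lemma cwf_mor_esub: "is_cwf_mor C D N \<Longrightarrow> f \<in> Hom C \<Delta> \<Gamma> \<Longrightarrow> A \<in> Ty C \<Gamma> \<Longrightarrow> a \<in> Tm C \<Gamma> A \<Longrightarrow>
    Ft N \<Delta> (tsub C A f) (esub C a f) = esub D (Ft N \<Gamma> A a) (Fm N f)"
  by (simp add: is_cwf_mor_def)

lemma cwf_mor_var: "is_cwf_mor C D N \<Longrightarrow> \<Gamma> \<in> Ob C \<Longrightarrow> A \<in> Ty C \<Gamma> \<Longrightarrow>
    Ft N (ext C \<Gamma> A) (tsub C A (pr C \<Gamma> A)) (var C \<Gamma> A) = var D (Fo N \<Gamma>) (Fs N \<Gamma> A)"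
  by (simp add: is_cwf_mor_def)

lemma cwf_mor_pair:
  "is_cwf_mor C D N \<Longrightarrow> f \<in> Hom C \<Delta> \<Gamma> \<Longrightarrow> A \<in> Ty C \<Gamma> \<Longrightarrow> a \<in> Tm C \<Delta> (tsub C A f) \<Longrightarrow>
    Fm N (pair C f a A) = pair D (Fm N f) (Ft N \<Delta> (tsub C A f) a) (Fs N \<Gamma> A)"
  by (simp add: is_cwf_mor_def)

primrec judg_ctx :: "('s, 'f) judg \<Rightarrow> ('s, 'f) ctx" where
  "judg_ctx (JCtx \<Gamma>) = \<Gamma>"
| "judg_ctx (JType \<Gamma> A) = \<Gamma>"
| "judg_ctx (JTerm \<Gamma> a A) = \<Gamma>"

locale parallel_FSigma_mors =
  fixes \<Sigma> :: "('s, 'f) decl set"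
    and C :: "('o, 'm, 't, 'e, 'z) cwf_scheme"
    and M M' :: "(('s, 'f) ctx, ('s, 'f) fmor, ('s, 'f) fty, ('s, 'f) ftm, 'o, 'm, 't, 'e) cwf_mor"
  assumes cwf: "is_cwf C"
    and mor: "is_cwf_mor (FSigma \<Sigma>) C M"
    and mor': "is_cwf_mor (FSigma \<Sigma>) C M'"
begin

definition ty_agree :: "('s, 'f) ctx \<Rightarrow> ('s, 'f) pty \<Rightarrow> bool" where
  "ty_agree \<Delta> A \<longleftrightarrow> Fs M \<Delta> (\<Delta>, A) = Fs M' \<Delta> (\<Delta>, A)"

definition tm_agree :: "('s, 'f) ctx \<Rightarrow> 'f pre \<Rightarrow> ('s, 'f) pty \<Rightarrow> bool" where
  "tm_agree \<Delta> a A \<longleftrightarrow> Ft M \<Delta> (\<Delta>, A) ((\<Delta>, A), a) = Ft M' \<Delta> (\<Delta>, A) ((\<Delta>, A), a)"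

definition ctx_agree :: "('s, 'f) ctx \<Rightarrow> bool" where
  "ctx_agree \<Gamma> \<longleftrightarrow> Fo M \<Gamma> = Fo M' \<Gamma>
     \<and> (\<forall>n < length \<Gamma>. ty_agree (take n \<Gamma>) (snd (\<Gamma> ! n)))
     \<and> (\<forall>i < length \<Gamma>. tm_agree \<Gamma> (Var (fst (\<Gamma> ! i))) (snd (\<Gamma> ! i)))"

lemma Fm_agree_cmap:
  assumes f: "(\<Delta>, \<Gamma>, as) \<in> Mor (FSigma \<Sigma>)" and "Fo M \<Delta> = Fo M' \<Delta>" and "ctx_agree \<Gamma>"
    and terms: "\<forall>k < length \<Gamma>. tm_agree \<Delta> (as ! k) (cmap_type \<Gamma> as k)"
  shows "Fm M (\<Delta>, \<Gamma>, as) = Fm M' (\<Delta>, \<Gamma>, as)"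
proof -
  have len: "length as = length \<Gamma>" and "precontext \<Gamma>" "precontext \<Delta>" "JCtx \<Delta> \<in> Jdg \<Sigma>"
    using f by (auto simp: cmap_in_iff)
  have hom: "(\<Delta>, take n \<Gamma>, take n as) \<in> Hom (FSigma \<Sigma>) \<Delta> (take n \<Gamma>)" if "n \<le> length \<Gamma>" for n
    using f that by (simp add: Hom_FSigma cmap_in_take precontext_take)
  have "Fm M (\<Delta>, take n \<Gamma>, take n as) = Fm M' (\<Delta>, take n \<Gamma>, take n as)" if "n \<le> length \<Gamma>" for n
    using that
  proof (induction n)
    case 0
    \<comment> \<open>both images are maps into the terminal object\<close>
    have "(\<Delta>, [], []) \<in> Hom (FSigma \<Sigma>) \<Delta> (top (FSigma \<Sigma>))"
      using hom[of 0] by simp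
    then show ?case
      using cwf_mor_Hom[OF mor] cwf_mor_Hom[OF mor'] cwf_mor_top[OF mor] cwf_mor_top[OF mor']
        cwf_Hom_top_unique[OF cwf cwf_mor_Ob[OF mor]] \<open>Fo M \<Delta> = Fo M' \<Delta>\<close>
        \<open>precontext \<Delta>\<close> \<open>JCtx \<Delta> \<in> Jdg \<Sigma>\<close>
      by (metis FSigma_simps(1) take0)
  next
    case (Suc n)
    define A where "A = (take n \<Gamma>, snd (\<Gamma> ! n))"
    define a where "a = ((\<Delta>, cmap_type \<Gamma> as n), as ! n)"
    have n: "n < length \<Gamma>" using Suc.prems by simp
    have fH: "(\<Delta>, take n \<Gamma>, take n as) \<in> Hom (FSigma \<Sigma>) \<Delta> (take n \<Gamma>)"
      using hom n by simp
    have A: "A \<in> Ty (FSigma \<Sigma>) (take n \<Gamma>)"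
      using f n JType_nth_ctx by (auto simp: A_def cmap_in_iff)
    have tsub: "tsub (FSigma \<Sigma>) A (\<Delta>, take n \<Gamma>, take n as) = (\<Delta>, cmap_type \<Gamma> as n)"
      by (simp add: A_def cmap_type_def sbc_def OV_take)
    have a: "a \<in> Tm (FSigma \<Sigma>) \<Delta> (tsub (FSigma \<Sigma>) A (\<Delta>, take n \<Gamma>, take n as))"
      using f n by (simp add: tsub a_def cmap_in_iff)
    have agree: "Fs M (take n \<Gamma>) A = Fs M' (take n \<Gamma>) A"
      "Ft M \<Delta> (\<Delta>, cmap_type \<Gamma> as n) a = Ft M' \<Delta> (\<Delta>, cmap_type \<Gamma> as n) a"
      using \<open>ctx_agree \<Gamma>\<close> terms n by (auto simp: A_def a_def ctx_agree_def ty_agree_def tm_agree_def)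
    have pair: "(\<Delta>, take (Suc n) \<Gamma>, take (Suc n) as) = pair (FSigma \<Sigma>) (\<Delta>, take n \<Gamma>, take n as) a A"
      unfolding a_def A_def using FSigma_pair_take_Suc[OF \<open>precontext \<Gamma>\<close> n len] .
    show ?case
      unfolding pair cwf_mor_pair[OF mor fH A a] cwf_mor_pair[OF mor' fH A a] tsub
      using agree Suc n by simp
  qed
  from this[of "length \<Gamma>"] show ?thesis using len by simp
qed

lemma ty_agree_subst:
  assumes f: "(\<Delta>, \<Gamma>, as) \<in> Hom (FSigma \<Sigma>) \<Delta> \<Gamma>" and "JType \<Gamma> A \<in> Jdg \<Sigma>"
    and "Fm M (\<Delta>, \<Gamma>, as) = Fm M' (\<Delta>, \<Gamma>, as)" and "ty_agree \<Gamma> A"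
  shows "ty_agree \<Delta> (subst_pty (sbc \<Gamma> as) A)"
proof -
  have A: "(\<Gamma>, A) \<in> Ty (FSigma \<Sigma>) \<Gamma>" using assms by simp
  show ?thesis
    using cwf_mor_tsub[OF mor f A] cwf_mor_tsub[OF mor' f A] assms by (simp add: ty_agree_def)
qed

lemma tm_agree_subst:
  assumes f: "(\<Delta>, \<Gamma>, as) \<in> Hom (FSigma \<Sigma>) \<Delta> \<Gamma>"
    and "JType \<Gamma> A \<in> Jdg \<Sigma>" and "JTerm \<Gamma> a A \<in> Jdg \<Sigma>"
    and "Fm M (\<Delta>, \<Gamma>, as) = Fm M' (\<Delta>, \<Gamma>, as)" and "tm_agree \<Gamma> a A"
  shows "tm_agree \<Delta> (subst_pre (sbc \<Gamma> as) a) (subst_pty (sbc \<Gamma> as) A)"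
proof -
  have A: "(\<Gamma>, A) \<in> Ty (FSigma \<Sigma>) \<Gamma>" and a: "((\<Gamma>, A), a) \<in> Tm (FSigma \<Sigma>) \<Gamma> (\<Gamma>, A)"
    using assms by simp_all
  show ?thesis
    using cwf_mor_esub[OF mor f A a] cwf_mor_esub[OF mor' f A a] assms by (simp add: tm_agree_def)
qed

lemma ctx_agree_Nil: "ctx_agree []"
  using cwf_mor_top[OF mor] cwf_mor_top[OF mor'] by (simp add: ctx_agree_def)

lemma ctx_agree_snoc:
  assumes pc: "precontext (\<Gamma> @ [(fresh \<Gamma>, A)])" and \<Gamma>: "JCtx \<Gamma> \<in> Jdg \<Sigma>" and A: "JType \<Gamma> A \<in> Jdg \<Sigma>"
    and agree: "ctx_agree \<Gamma>" "ty_agree \<Gamma> A"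
  shows "ctx_agree (\<Gamma> @ [(fresh \<Gamma>, A)])" (is "ctx_agree ?\<Gamma>'")
proof -
  have p\<Gamma>: "precontext \<Gamma>"
    using precontext_take[OF pc, of "length \<Gamma>"] by simp
  have "\<Gamma> \<in> Ob (FSigma \<Sigma>)" "(\<Gamma>, A) \<in> Ty (FSigma \<Sigma>) \<Gamma>"
    using p\<Gamma> \<Gamma> A by simp_all
  note ext = cwf_mor_ext[OF _ this] and pr = cwf_mor_pr[OF _ this] and var = cwf_mor_var[OF _ this]
  have "JCtx ?\<Gamma>' \<in> Jdg \<Sigma>" using \<Gamma> A by (rule Jdg.R2)
  then have p: "(?\<Gamma>', \<Gamma>, map Var (OV \<Gamma>)) \<in> Hom (FSigma \<Sigma>) ?\<Gamma>' \<Gamma>"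
    using pc p\<Gamma> cmap_in_proj by (simp add: Hom_FSigma)
  have Fo: "Fo M \<Gamma> = Fo M' \<Gamma>" and
    types: "\<forall>n < length \<Gamma>. ty_agree (take n \<Gamma>) (snd (\<Gamma> ! n))" and
    vars: "\<forall>i < length \<Gamma>. tm_agree \<Gamma> (Var (fst (\<Gamma> ! i))) (snd (\<Gamma> ! i))"
    using agree(1) by (simp_all add: ctx_agree_def)
  then have Fs: "Fs M \<Gamma> (\<Gamma>, A) = Fs M' \<Gamma> (\<Gamma>, A)"
    using agree(2) by (simp add: ty_agree_def)
  have Fm_p: "Fm M (?\<Gamma>', \<Gamma>, map Var (OV \<Gamma>)) = Fm M' (?\<Gamma>', \<Gamma>, map Var (OV \<Gamma>))"
    using pr[OF mor] pr[OF mor'] Fo Fs by simp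
  have "tm_agree ?\<Gamma>' (Var (fst (?\<Gamma>' ! i))) (snd (?\<Gamma>' ! i))" if "i < length ?\<Gamma>'" for i
  proof (cases "i < length \<Gamma>")
    case True
    \<comment> \<open>an old variable is the image of itself under the projection \<open>p(A)\<close>\<close>
    then show ?thesis
      using tm_agree_subst[OF p JType_var[OF \<Gamma> True] Jdg.R3[OF \<Gamma> True] Fm_p] vars
      by (simp add: sbc_def subst_pty_Var_self subst_pre_Var_self nth_append del: subst_pre.simps)
  next
    case False
    then have "i = length \<Gamma>" using that by simp
    then show ?thesis
      using var[OF mor] var[OF mor'] Fo Fs by (simp add: tm_agree_def sbc_def subst_pty_Var_self)
  qed
  moreover have "ty_agree (take n ?\<Gamma>') (snd (?\<Gamma>' ! n))" if "n < length ?\<Gamma>'" for n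
    using that types agree(2) by (cases "n < length \<Gamma>") (auto simp: nth_append)
  ultimately show ?thesis
    using ext[OF mor] ext[OF mor'] Fo Fs by (simp add: ctx_agree_def)
qed

primrec judg_agree :: "('s, 'f) judg \<Rightarrow> bool" where
  "judg_agree (JCtx \<Gamma>) = ctx_agree \<Gamma>"
| "judg_agree (JType \<Gamma> A) = ty_agree \<Gamma> A"
| "judg_agree (JTerm \<Gamma> a A) = tm_agree \<Gamma> a A"

end

locale parallel_FSigma_mors_on_generators = parallel_FSigma_mors +
  assumes sig: "signature \<Sigma>"
    and type_generators: "\<And>\<Gamma> S. DTy \<Gamma> S \<in> \<Sigma> \<Longrightarrow> ty_agree \<Gamma> (PTy S (map Var (OV \<Gamma>)))"
    and term_generators: "\<And>\<Gamma> f U. DFun \<Gamma> f U \<in> \<Sigma> \<Longrightarrow> tm_agree \<Gamma> (App f (map Var (OV \<Gamma>))) U"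
begin

lemma Jdg_agree: "j \<in> Jdg \<Sigma> \<Longrightarrow> precontext (judg_ctx j) \<Longrightarrow> judg_agree j"
proof (induction rule: Jdg.induct)
  case R1
  then show ?case by (simp add: ctx_agree_Nil)
next
  case (R2 \<Gamma> A)
  then show ?case using ctx_agree_snoc precontext_take[of "\<Gamma> @ _" "length \<Gamma>"] by simp
next
  case (R3 \<Gamma> i)
  then show ?case by (simp add: ctx_agree_def)
next
  case (R4 \<Gamma> S \<Delta> as)
  have p: "precontext \<Delta>" "precontext \<Gamma>"
    using R4.prems R4.hyps(1) sig by (auto simp: signature_def presignature_def)
  have cm: "cmap_in (Jdg \<Sigma>) \<Delta> \<Gamma> as"
    and terms: "\<forall>k < length \<Gamma>. tm_agree \<Delta> (as ! k) (cmap_type \<Gamma> as k)"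
    using R4.hyps R4.IH p by (auto simp: cmap_in_iff cmap_type_def)
  have \<Gamma>: "JCtx \<Gamma> \<in> Jdg \<Sigma>" and len: "length as = length \<Gamma>"
    using cm by (simp_all add: cmap_in_iff)
  have f: "(\<Delta>, \<Gamma>, as) \<in> Hom (FSigma \<Sigma>) \<Delta> \<Gamma>"
    using p cm by (simp add: Hom_FSigma)
  have "ctx_agree \<Delta>" "ctx_agree \<Gamma>"
    using R4.IH p by simp_all
  then have Fm: "Fm M (\<Delta>, \<Gamma>, as) = Fm M' (\<Delta>, \<Gamma>, as)"
    using Fm_agree_cmap p cm terms by (simp add: ctx_agree_def)
  have "cmap_in (Jdg \<Sigma>) \<Gamma> \<Gamma> (map Var (OV \<Gamma>))"
    using cmap_in_proj[of \<Gamma> "[]"] \<Gamma> by simp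
  then have "JType \<Gamma> (PTy S (map Var (OV \<Gamma>))) \<in> Jdg \<Sigma>"
    using Jdg.R4[OF R4.hyps(1) \<Gamma> \<Gamma>] by (simp add: cmap_in_def)
  from ty_agree_subst[OF f this Fm type_generators[OF R4.hyps(1)]] show ?case
    using map_subst_pre_Var[OF precontext_distinct_OV[OF p(2)], of as] len by (simp add: sbc_def)
next
  case (R5 \<Gamma> f U \<Delta> as)
  have p: "precontext \<Delta>" "precontext \<Gamma>" and U: "JType \<Gamma> U \<in> Jdg \<Sigma>"
    using R5.prems R5.hyps(1) sig by (auto simp: signature_def presignature_def)
  have cm: "cmap_in (Jdg \<Sigma>) \<Delta> \<Gamma> as"
    and terms: "\<forall>k < length \<Gamma>. tm_agree \<Delta> (as ! k) (cmap_type \<Gamma> as k)"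
    using R5.hyps R5.IH p by (auto simp: cmap_in_iff cmap_type_def)
  have \<Gamma>: "JCtx \<Gamma> \<in> Jdg \<Sigma>" and len: "length as = length \<Gamma>"
    using cm by (simp_all add: cmap_in_iff)
  have h: "(\<Delta>, \<Gamma>, as) \<in> Hom (FSigma \<Sigma>) \<Delta> \<Gamma>"
    using p cm by (simp add: Hom_FSigma)
  have "ctx_agree \<Delta>" "ctx_agree \<Gamma>"
    using R5.IH p by simp_all
  then have Fm: "Fm M (\<Delta>, \<Gamma>, as) = Fm M' (\<Delta>, \<Gamma>, as)"
    using Fm_agree_cmap p cm terms by (simp add: ctx_agree_def)
  have "cmap_in (Jdg \<Sigma>) \<Gamma> \<Gamma> (map Var (OV \<Gamma>))"
    using cmap_in_proj[of \<Gamma> "[]"] \<Gamma> by simp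
  then have "JTerm \<Gamma> (App f (map Var (OV \<Gamma>))) U \<in> Jdg \<Sigma>"
    using Jdg.R5[where as = "map Var (OV \<Gamma>)", OF R5.hyps(1) \<Gamma> \<Gamma>] U
    by (simp add: cmap_in_def sbc_def subst_pty_Var_self)
  from tm_agree_subst[OF h U this Fm term_generators[OF R5.hyps(1)]] show ?case
    using map_subst_pre_Var[OF precontext_distinct_OV[OF p(2)], of as] len by (simp add: sbc_def)
qed

lemma cwf_mor_eq_FSigma: "cwf_mor_eq (FSigma \<Sigma>) M M'"
proof -
  have ctx: "ctx_agree \<Gamma>" if "precontext \<Gamma>" "JCtx \<Gamma> \<in> Jdg \<Sigma>" for \<Gamma>
    using that Jdg_agree[of "JCtx \<Gamma>"] by simp
  have Fm: "Fm M (\<Delta>, \<Gamma>, as) = Fm M' (\<Delta>, \<Gamma>, as)" if f: "(\<Delta>, \<Gamma>, as) \<in> Mor (FSigma \<Sigma>)" for \<Delta> \<Gamma> as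
  proof (rule Fm_agree_cmap[OF f])
    show "Fo M \<Delta> = Fo M' \<Delta>" and "ctx_agree \<Gamma>"
      using f ctx by (auto simp: cmap_in_iff ctx_agree_def)
    show "\<forall>k < length \<Gamma>. tm_agree \<Delta> (as ! k) (cmap_type \<Gamma> as k)"
      using f Jdg_agree[of "JTerm \<Delta> _ _"] by (auto simp: cmap_in_iff)
  qed
  have Fs: "Fs M \<Gamma> (\<Gamma>', A) = Fs M' \<Gamma> (\<Gamma>', A)"
    if "precontext \<Gamma>" "(\<Gamma>', A) \<in> Ty (FSigma \<Sigma>) \<Gamma>" for \<Gamma> \<Gamma>' A
    using that Jdg_agree[of "JType \<Gamma> A"] by (simp add: ty_agree_def)
  have Ft: "Ft M \<Gamma> (\<Gamma>', A) a = Ft M' \<Gamma> (\<Gamma>', A) a"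
    if "precontext \<Gamma>" "a \<in> Tm (FSigma \<Sigma>) \<Gamma> (\<Gamma>', A)" for \<Gamma> \<Gamma>' A a
    using that Jdg_agree[of "JTerm \<Gamma> (snd a) A"] by (cases a) (auto simp: tm_agree_def)
  show ?thesis
    unfolding cwf_mor_eq_def using ctx Fm Fs Ft by (auto simp: ctx_agree_def)
qed

end

theorem mainTheorem13:
  fixes \<Sigma> :: "('s, 'f) decl set"
    and C :: "('o, 'm, 't, 'e, 'z) cwf_scheme"
    and M M' :: "(('s, 'f) ctx, ('s, 'f) fmor, ('s, 'f) fty, ('s, 'f) ftm, 'o, 'm, 't, 'e) cwf_mor"
  assumes "signature \<Sigma>"
    and "is_cwf C"
    and "is_cwf_mor (FSigma \<Sigma>) C M"
    and "is_cwf_mor (FSigma \<Sigma>) C M'"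
    and "\<And>\<Gamma> S. DTy \<Gamma> S \<in> \<Sigma> \<Longrightarrow> Fo M \<Gamma> = Fo M' \<Gamma>"
    and "\<And>\<Gamma> f U. DFun \<Gamma> f U \<in> \<Sigma> \<Longrightarrow> Fo M \<Gamma> = Fo M' \<Gamma>"
    and "\<And>\<Gamma> S. DTy \<Gamma> S \<in> \<Sigma> \<Longrightarrow>
           Fs M \<Gamma> (\<Gamma>, PTy S (map Var (OV \<Gamma>))) = Fs M' \<Gamma> (\<Gamma>, PTy S (map Var (OV \<Gamma>)))"
    and "\<And>\<Gamma> f U. DFun \<Gamma> f U \<in> \<Sigma> \<Longrightarrow> Fs M \<Gamma> (\<Gamma>, U) = Fs M' \<Gamma> (\<Gamma>, U)"
    and "\<And>\<Gamma> f U. DFun \<Gamma> f U \<in> \<Sigma> \<Longrightarrow>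
           Ft M \<Gamma> (\<Gamma>, U) ((\<Gamma>, U), App f (map Var (OV \<Gamma>)))
         = Ft M' \<Gamma> (\<Gamma>, U) ((\<Gamma>, U), App f (map Var (OV \<Gamma>)))"
  shows "cwf_mor_eq (FSigma \<Sigma>) M M'"
proof -
  interpret parallel_FSigma_mors \<Sigma> C M M'
    using assms(2-4) by unfold_locales
  interpret parallel_FSigma_mors_on_generators \<Sigma> C M M'
    using assms(1,7,9) by unfold_locales (simp_all add: ty_agree_def tm_agree_def)
  show ?thesis
    by (rule cwf_mor_eq_FSigma)
qed

end
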